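(* Let $p\geq 1$, let $\boldsymbol \Omega$ be a $p \times p$ positive definite matrix and let $0 < c < 1/2$. Let $\boldsymbol \beta$ have the structured normal-gamma (SNG) prior with parameters $c, \boldsymbol \Omega$, with marginal density $$p(\boldsymbol b \mid c, \boldsymbol \Omega) = \int_{(0,\infty)^p} \Big(\prod_{i=1}^p \frac{1}{s_i}\, g_c(s_i)\Big)\, \phi_{\boldsymbol \Omega}(\boldsymbol b / \boldsymbol s)\, d\boldsymbol s \in [0,+\infty],$$ where $\phi_{\boldsymbol \Omega}$ is the $\text{normal}(\boldsymbol 0, \boldsymbol \Omega)$ density, $\boldsymbol b/\boldsymbol s$ is elementwise division, and $g_c$ is the density of $s_i = \sqrt{s_i^2}$ when $s_i^2 \sim \text{gamma}(\text{shape } c, \text{rate } c)$, i.e. $g_c(s) \propto s^{2c-1} e^{-c s^2}$ on $(0,\infty)$. If $\boldsymbol b \in \mathbb{R}^p$ satisfies $b_j = 0$ for some $j \in \{1, \dots, p\}$, then $p(\boldsymbol b \mid c, \boldsymbol \Omega) = +\infty$.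
   Context: The SNG prior is the distribution of $\boldsymbol \beta = \boldsymbol s \circ \boldsymbol z$ (elementwise product), where $\boldsymbol z \sim \text{normal}(\boldsymbol 0, \boldsymbol \Omega)$ is independent of $\boldsymbol s$, and $s_1^2,\dots,s_p^2$ are i.i.d. gamma with shape $c$ and rate $c$ (so $\mathbb{E}[s_j^2]=1$), $s_j>0$. The displayed integral is the marginal (joint) prior density of $\boldsymbol \beta$ at $\boldsymbol b$, allowed to equal $+\infty$. *)

theory Defs
  imports "HOL-Analysis.Analysis"
begin

definition pos_def_matrix :: "real^'n^'n \<Rightarrow> bool" where
  "pos_def_matrix A \<longleftrightarrow> transpose A = A \<and> (\<forall>x. x \<noteq> 0 \<longrightarrow> x \<bullet> (A *v x) > 0)"

definition normal_density :: "real^'n^'n \<Rightarrow> real^'n \<Rightarrow> real" where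
  "normal_density Om x =
     (2 * pi) powr (- real CARD('n) / 2) * det Om powr (- 1 / 2)
     * exp (- (x \<bullet> (matrix_inv Om *v x)) / 2)"

text \<open>Density of s = sqrt(t) when t ~ gamma(shape c, rate c), on (0,infinity):
  g_c(s) = 2 c^c / Gamma(c) * s^(2c-1) * exp(-c s^2).\<close>
definition sqrt_gamma_density :: "real \<Rightarrow> real \<Rightarrow> real" where
  "sqrt_gamma_density c s =
     (if s > 0 then 2 * c powr c / Gamma c * s powr (2 * c - 1) * exp (- c * s\<^sup>2) else 0)"

definition sng_density :: "real \<Rightarrow> real^'n^'n \<Rightarrow> real^'n \<Rightarrow> ennreal" where
  "sng_density c Om b =
     (\<integral>\<^sup>+ s. indicator {s. \<forall>i. 0 < s $ i} s *
        ennreal ((\<Prod>i\<in>UNIV. sqrt_gamma_density c (s $ i) / s $ i)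
                 * normal_density Om (\<chi> i. b $ i / s $ i)) \<partial>lborel)"

end

theory Submission
  imports Defs
begin

(* Take the box where s_j ranges over (0, e) and every other s_i over (1, 2). Since b_j = 0,
   every argument b_i / s_i of the normal density is bounded by |b_i| there, so that factor is
   bounded below; the factor g_c(s_j) / s_j is at least a constant times e^(2c - 2). As the box
   has volume e, the density is at least a constant times e^(2c - 1), which is unbounded as
   e tends to 0 because c < 1/2. *)

lemma det_nonzero_if_quadratic_form_pos:
  fixes A :: "real^'n^'n"
  assumes "\<And>x. x \<noteq> 0 \<Longrightarrow> 0 < x \<bullet> (A *v x)"
  shows "det A \<noteq> 0"
proof -
  have "inj ((*v) A)"
  proof (rule injI)
    fix x y assume "A *v x = A *v y"
    then have "(x - y) \<bullet> (A *v (x - y)) = 0"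
      by (simp add: matrix_vector_mult_diff_distrib)
    then show "x = y"
      using assms[of "x - y"] by force
  qed
  then show ?thesis
    using det_nz_iff_inj[of "(*v) A"] by (simp add: matrix_vector_mul_linear)
qed

lemma det_pos_if_quadratic_form_pos:
  fixes A :: "real^'n^'n"
  assumes pos: "\<And>x. x \<noteq> 0 \<Longrightarrow> 0 < x \<bullet> (A *v x)"
  shows "0 < det A"
proof -
  \<comment> \<open>The determinant never vanishes on the segment from the identity to A,
    so it keeps the sign of det I = 1.\<close>
  define M where "M t = (1 - t) *\<^sub>R mat 1 + t *\<^sub>R A" for t :: real
  have "det (M t) \<noteq> 0" if "0 \<le> t" "t \<le> 1" for t
  proof (rule det_nonzero_if_quadratic_form_pos)
    fix x :: "real^'n" assume "x \<noteq> 0"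
    have "x \<bullet> (M t *v x) = (1 - t) * (x \<bullet> x) + t * (x \<bullet> (A *v x))"
      by (simp add: M_def matrix_vector_mult_add_rdistrib inner_add_right
          scaleR_matrix_vector_assoc[symmetric])
    also have "\<dots> > 0"
      using pos[OF \<open>x \<noteq> 0\<close>] \<open>x \<noteq> 0\<close> that
      by (smt (verit) inner_gt_zero_iff mult_nonneg_nonneg mult_pos_pos)
    finally show "0 < x \<bullet> (M t *v x)" .
  qed
  moreover have "continuous_on {0..1} (\<lambda>t. det (M t))"
    unfolding det_def M_def by (simp add: continuous_intros)
  moreover have "det (M 0) = 1" "det (M 1) = det A"
    by (simp_all add: M_def)
  ultimately show ?thesis
    using IVT2'[of "\<lambda>t. det (M t)" 1 0 0] by force
qed

lemma quadratic_form_le_abs_sum: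
  fixes A :: "real^'n^'n" and x b :: "real^'n"
  assumes "\<And>i. \<bar>x $ i\<bar> \<le> \<bar>b $ i\<bar>"
  shows "x \<bullet> (A *v x) \<le> (\<Sum>i\<in>UNIV. \<Sum>k\<in>UNIV. \<bar>b $ i\<bar> * \<bar>A $ i $ k\<bar> * \<bar>b $ k\<bar>)"
proof -
  have "x \<bullet> (A *v x) = (\<Sum>i\<in>UNIV. \<Sum>k\<in>UNIV. x $ i * A $ i $ k * x $ k)"
    by (simp add: inner_vec_def matrix_vector_mult_def sum_distrib_left mult.assoc)
  also have "\<dots> \<le> (\<Sum>i\<in>UNIV. \<Sum>k\<in>UNIV. \<bar>b $ i\<bar> * \<bar>A $ i $ k\<bar> * \<bar>b $ k\<bar>)"
  proof (intro sum_mono)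
    fix i k
    have "x $ i * A $ i $ k * x $ k \<le> \<bar>x $ i\<bar> * \<bar>A $ i $ k\<bar> * \<bar>x $ k\<bar>"
      by (metis abs_ge_self abs_mult)
    also have "\<dots> \<le> \<bar>b $ i\<bar> * \<bar>A $ i $ k\<bar> * \<bar>b $ k\<bar>"
      using assms by (intro mult_mono) auto
    finally show "x $ i * A $ i $ k * x $ k \<le> \<bar>b $ i\<bar> * \<bar>A $ i $ k\<bar> * \<bar>b $ k\<bar>" .
  qed
  finally show ?thesis .
qed

lemma normal_density_ge:
  fixes Om :: "real^'n^'n" and x b :: "real^'n"
  assumes "\<And>i. \<bar>x $ i\<bar> \<le> \<bar>b $ i\<bar>"
  shows "(2 * pi) powr (- real CARD('n) / 2) * det Om powr (- 1 / 2)
           * exp (- (\<Sum>i\<in>UNIV. \<Sum>k\<in>UNIV. \<bar>b $ i\<bar> * \<bar>matrix_inv Om $ i $ k\<bar> * \<bar>b $ k\<bar>) / 2)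
         \<le> normal_density Om x"
  unfolding normal_density_def
  using quadratic_form_le_abs_sum[of x b "matrix_inv Om", OF assms]
  by (intro mult_left_mono) auto

lemma sqrt_gamma_density_div_ge:
  assumes "0 < c" "c \<le> 1" "0 < s" "s \<le> a" "s \<le> b"
  shows "2 * c powr c / Gamma c * a powr (2 * c - 2) * exp (- c * b\<^sup>2)
         \<le> sqrt_gamma_density c s / s"
proof -
  have "s powr (2 * c - 1) = s powr (2 * c - 2) * s"
    using powr_add[of s "2 * c - 2" 1] assms(3) by simp
  then have density: "sqrt_gamma_density c s / s
      = 2 * c powr c / Gamma c * (s powr (2 * c - 2) * exp (- c * s\<^sup>2))"
    using assms(3) by (simp add: sqrt_gamma_density_def)
  have "a powr (2 * c - 2) \<le> s powr (2 * c - 2)"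
    using assms by (intro powr_mono2') auto
  moreover have "exp (- c * b\<^sup>2) \<le> exp (- c * s\<^sup>2)"
    using assms by (simp add: power_mono)
  ultimately have "a powr (2 * c - 2) * exp (- c * b\<^sup>2) \<le> s powr (2 * c - 2) * exp (- c * s\<^sup>2)"
    by (intro mult_mono) auto
  moreover have "0 \<le> 2 * c powr c / Gamma c"
    using assms(1) by simp
  ultimately show ?thesis
    unfolding density mult.assoc by (rule mult_left_mono)
qed

lemma emeasure_lborel_box_cart:
  fixes lo hi :: "real^'n"
  assumes "\<And>i. lo $ i \<le> hi $ i"
  shows "emeasure lborel (box lo hi) = ennreal (\<Prod>i\<in>UNIV. hi $ i - lo $ i)"
proof -
  have "lo \<in> cbox lo hi"
    using assms by (simp add: mem_box_cart)
  then have "cbox lo hi \<noteq> {}"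
    by blast
  have "emeasure lborel (box lo hi) = emeasure lborel (cbox lo hi)"
    by (simp add: emeasure_lborel_box_eq emeasure_lborel_cbox_eq)
  also have "\<dots> = ennreal (measure lborel (cbox lo hi))"
    by (intro emeasure_eq_ennreal_measure) (simp add: emeasure_lborel_cbox_eq)
  also have "measure lborel (cbox lo hi) = (\<Prod>i\<in>UNIV. hi $ i - lo $ i)"
    using \<open>cbox lo hi \<noteq> {}\<close> by (rule content_cbox_cart)
  finally show ?thesis .
qed

lemma nn_integral_ge_const_on:
  assumes "A \<in> sets M" "\<And>x. x \<in> A \<Longrightarrow> c \<le> f x"
  shows "c * emeasure M A \<le> (\<integral>\<^sup>+ x. f x \<partial>M)"
proof -
  have "c * emeasure M A = (\<integral>\<^sup>+ x. c * indicator A x \<partial>M)"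
    using assms(1) by (simp add: nn_integral_cmult_indicator)
  also have "\<dots> \<le> (\<integral>\<^sup>+ x. f x \<partial>M)"
    using assms(2) by (intro nn_integral_mono) (simp split: split_indicator)
  finally show ?thesis .
qed

lemma ennreal_eq_top_if_ge_powr_near_0:
  fixes X :: ennreal
  assumes "0 < G" "a < 0" "\<And>e. 0 < e \<Longrightarrow> e \<le> 1 \<Longrightarrow> ennreal (G * e powr a) \<le> X"
  shows "X = \<infinity>"
proof (cases X rule: ennreal_cases)
  case (real r)
  define t where "t = max 1 ((r + 1) / G)"
  have "t powr (1 / a) \<le> 1 powr (1 / a)"
    using assms(2) by (intro powr_mono2') (auto simp: t_def)
  moreover have "(t powr (1 / a)) powr a = t"
    using assms(2) by (simp add: t_def powr_powr)
  ultimately have "ennreal (G * t) \<le> ennreal r"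
    using assms(3)[of "t powr (1 / a)"] real by (simp add: t_def)
  moreover have "r + 1 \<le> G * t"
    using assms(1) pos_divide_le_eq[of G "r + 1" t] by (simp add: t_def mult.commute)
  ultimately show ?thesis
    using real by (simp add: ennreal_le_iff)
qed simp

lemma prod_sqrt_gamma_density_div_ge:
  fixes s w :: "real^'n"
  assumes "0 < c" "c \<le> 1" "\<And>i. 0 < s $ i" "\<And>i. s $ i \<le> 2 * w $ i" "\<And>i. s $ i \<le> 2"
  shows "(2 * c powr c / Gamma c * 2 powr (2 * c - 2) * exp (- c * 2\<^sup>2)) ^ CARD('n)
           * (\<Prod>i\<in>UNIV. w $ i powr (2 * c - 2))
         \<le> (\<Prod>i\<in>UNIV. sqrt_gamma_density c (s $ i) / s $ i)"
proof -
  define L where "L = 2 * c powr c / Gamma c * 2 powr (2 * c - 2) * exp (- c * 2\<^sup>2)"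
  have "L * w $ i powr (2 * c - 2) \<le> sqrt_gamma_density c (s $ i) / s $ i" for i
  proof -
    have "0 < w $ i"
      using assms(3,4)[of i] by simp
    then show ?thesis
      using sqrt_gamma_density_div_ge[OF assms(1-3) assms(4,5)[of i]]
      by (simp add: L_def powr_mult mult_ac)
  qed
  then have "(\<Prod>i\<in>UNIV. L * w $ i powr (2 * c - 2))
      \<le> (\<Prod>i\<in>UNIV. sqrt_gamma_density c (s $ i) / s $ i)"
    using assms(1) by (intro prod_mono) (simp add: L_def)
  then show ?thesis
    unfolding L_def[symmetric] by (simp add: prod.distrib)
qed

lemma sng_density_ge_powr:
  fixes Om :: "real^'n^'n" and b :: "real^'n"
  assumes "0 < det Om" "0 < c" "c \<le> 1" "b $ j = 0"
  obtains G where "0 < G"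
    "\<And>e. 0 < e \<Longrightarrow> e \<le> 1 \<Longrightarrow> ennreal (G * e powr (2 * c - 1)) \<le> sng_density c Om b"
proof -
  define L where "L = 2 * c powr c / Gamma c * 2 powr (2 * c - 2) * exp (- c * 2\<^sup>2)"
  define N where "N = (2 * pi) powr (- real CARD('n) / 2) * det Om powr (- 1 / 2)
      * exp (- (\<Sum>i\<in>UNIV. \<Sum>k\<in>UNIV. \<bar>b $ i\<bar> * \<bar>matrix_inv Om $ i $ k\<bar> * \<bar>b $ k\<bar>) / 2)"
  define G where "G = L ^ CARD('n) * N"
  have "0 < G"
    using assms(1,2) by (simp add: G_def L_def N_def)
  moreover have "ennreal (G * e powr (2 * c - 1)) \<le> sng_density c Om b"
    if "0 < e" "e \<le> 1" for e
  proof -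
    define lo :: "real^'n" where "lo = (\<chi> i. if i = j then 0 else 1)"
    define w :: "real^'n" where "w = (\<chi> i. if i = j then e else 1)"
    have bound: "G * e powr (2 * c - 2)
        \<le> (\<Prod>i\<in>UNIV. sqrt_gamma_density c (s $ i) / s $ i) * normal_density Om (\<chi> i. b $ i / s $ i)"
      and pos: "\<forall>i. 0 < s $ i"
      if "s \<in> box lo (lo + w)" for s
    proof -
      have s: "lo $ i < s $ i" "s $ i < lo $ i + w $ i" for i
        using that by (simp_all add: mem_box_cart)
      have si: "0 < s $ i" "s $ i \<le> 2 * w $ i" "s $ i \<le> 2" "i \<noteq> j \<Longrightarrow> 1 < s $ i" for i
        using s[of i] \<open>e \<le> 1\<close> by (auto simp: lo_def w_def split: if_splits)
      then show "\<forall>i. 0 < s $ i" by blast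
      have "(\<Prod>i\<in>UNIV. w $ i powr (2 * c - 2))
          = (\<Prod>i\<in>UNIV. if i = j then e powr (2 * c - 2) else 1)"
        by (intro prod.cong) (simp_all add: w_def)
      then have "L ^ CARD('n) * e powr (2 * c - 2)
          \<le> (\<Prod>i\<in>UNIV. sqrt_gamma_density c (s $ i) / s $ i)"
        using prod_sqrt_gamma_density_div_ge[OF assms(2,3) si(1-3)] by (simp add: L_def)
      moreover have "N \<le> normal_density Om (\<chi> i. b $ i / s $ i)"
        unfolding N_def
      proof (rule normal_density_ge)
        fix i
        show "\<bar>(\<chi> i. b $ i / s $ i) $ i\<bar> \<le> \<bar>b $ i\<bar>"
          using si[of i] assms(4)
          by (cases "i = j") (auto simp: abs_divide divide_le_eq mult_le_cancel_left1)
      qed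
      moreover have "0 \<le> N" "0 \<le> L"
        using assms(2) by (simp_all add: N_def L_def)
      ultimately show "G * e powr (2 * c - 2)
          \<le> (\<Prod>i\<in>UNIV. sqrt_gamma_density c (s $ i) / s $ i) * normal_density Om (\<chi> i. b $ i / s $ i)"
        by (simp add: G_def mult_ac mult_mono)
    qed
    have "emeasure lborel (box lo (lo + w)) = ennreal e"
      using \<open>0 < e\<close> by (simp add: emeasure_lborel_box_cart w_def)
    moreover have "e powr (2 * c - 1) = e powr (2 * c - 2) * e"
      using powr_add[of e "2 * c - 2" 1] \<open>0 < e\<close> by simp
    ultimately have "ennreal (G * e powr (2 * c - 1))
        = ennreal (G * e powr (2 * c - 2)) * emeasure lborel (box lo (lo + w))"
      using \<open>0 < e\<close> \<open>0 < G\<close> by (simp add: ennreal_mult[symmetric] mult.assoc)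
    also have "\<dots> \<le> sng_density c Om b"
      unfolding sng_density_def
      using bound pos by (intro nn_integral_ge_const_on) (auto intro: ennreal_leI)
    finally show ?thesis .
  qed
  ultimately show ?thesis
    using that by blast
qed

theorem proposition2p2:
  fixes Om :: "real^'n^'n" and c :: real and b :: "real^'n"
  assumes "pos_def_matrix Om"
    and "0 < c" and "c < 1 / 2"
    and "\<exists>j. b $ j = 0"
  shows "sng_density c Om b = \<infinity>"
proof -
  obtain j where "b $ j = 0"
    using assms(4) by blast
  have "0 < det Om"
    using assms(1) by (intro det_pos_if_quadratic_form_pos) (simp add: pos_def_matrix_def)
  then obtain G where "0 < G"
    and "\<And>e. 0 < e \<Longrightarrow> e \<le> 1 \<Longrightarrow> ennreal (G * e powr (2 * c - 1)) \<le> sng_density c Om b"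
    using sng_density_ge_powr[of Om c b j] assms(2,3) \<open>b $ j = 0\<close> by auto
  then show ?thesis
    using assms(3) by (intro ennreal_eq_top_if_ge_powr_near_0[of G "2 * c - 1"]) auto
qed

end
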